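(* Let $H,\Delta\in\mathbb{C}^{n\times n}$ be Hermitian, let $H(t)=H+t\Delta$ for $t\in\mathbb{R}$, and let $f\in\mathbb{C}^n$ with $\|f\|_2=1$. Let $\lambda_1<\lambda_2<\dots<\lambda_m$ be the distinct eigenvalues of $H$. If $|t|\,\|\Delta\|_2<\gamma(H)/2$, then \[ W_1\big(\mu_f^{H},\mu_f^{H(t)}\big)\le \sum_{h=1}^{m-1}(\lambda_{h+1}-\lambda_h)\,\Big|\big\langle f,\big(P_{[h]}-P_{[h]}(t)\big)f\big\rangle\Big| + |t|\,\|\Delta\|_2 . \]
   Context: For a Hermitian matrix $M$ with distinct eigenvalues $\mathrm{spec}(M)$ and orthogonal eigenprojections $P_\lambda$, and a unit vector $f$, the power spectrum is $\mu_f^M=\sum_{\lambda\in\mathrm{spec}(M)}\langle f,P_\lambda f\rangle\delta_\lambda$, a probability measure on $\mathbb{R}$; $W_1$ is the 1-Wasserstein distance on $\mathbb{R}$; $\|\cdot\|_2$ is the spectral norm. $\gamma(H)=\min\{|\lambda-\mu|:\lambda\neq\mu,\ \lambda,\mu\in\mathrm{spec}(H)\}$ is the minimal gap between distinct eigenvalues (taken as $+\infty$ if $m=1$). When $|t|\|\Delta\|_2<\gamma(H)/2$, every eigenvalue of $H(t)$ lies within $|t|\|\Delta\|_2$ of exactly one $\lambda_j$; $P_h(t)$ denotes the orthogonal projection onto the sum of the eigenspaces of $H(t)$ whose eigenvalues lie within $|t|\|\Delta\|_2$ of $\lambda_h$, $P_{[h]}(t)=\sum_{j=1}^h P_j(t)$,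 and $P_{[h]}=P_{[h]}(0)$ is the projection onto the sum of the eigenspaces of $H$ for $\lambda_1,\dots,\lambda_h$. *)

theory Defs
  imports "HOL-Analysis.Analysis"
begin

definition cinner :: "complex^'n \<Rightarrow> complex^'n \<Rightarrow> complex" where
  "cinner x y = (\<Sum>i\<in>UNIV. cnj (x$i) * y$i)"

definition hermitian :: "complex^'n^'n \<Rightarrow> bool" where
  "hermitian A \<longleftrightarrow> (\<forall>i j. A$i$j = cnj (A$j$i))"

definition spec_norm :: "complex^'n^'n \<Rightarrow> real" where
  "spec_norm A = onorm (\<lambda>x. A *v x)"

text \<open>Real eigenvalues (all eigenvalues, for Hermitian matrices).\<close>
definition spec :: "complex^'n^'n \<Rightarrow> real set" where
  "spec M = {l. \<exists>v. v \<noteq> 0 \<and> M *v v = complex_of_real l *s v}"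

definition eigenspace :: "complex^'n^'n \<Rightarrow> real \<Rightarrow> (complex^'n) set" where
  "eigenspace M l = {v. M *v v = complex_of_real l *s v}"

definition orth_proj :: "(complex^'n) set \<Rightarrow> complex^'n^'n" where
  "orth_proj S = (THE P. \<forall>x. P *v x \<in> S \<and> (\<forall>y\<in>S. cinner y (x - P *v x) = 0))"

definition eigenproj :: "complex^'n^'n \<Rightarrow> real \<Rightarrow> complex^'n^'n" where
  "eigenproj M l = orth_proj (eigenspace M l)"

text \<open>Power spectrum mu_f^M, as a finitely supported weight function on the reals
  (weight of the Dirac mass at each point).\<close>
definition power_spectrum :: "complex^'n^'n \<Rightarrow> complex^'n \<Rightarrow> real \<Rightarrow> real" where
  "power_spectrum M f l = (if l \<in> spec M then Re (cinner f (eigenproj M l *v f)) else 0)"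

text \<open>1-Wasserstein distance between finitely supported measures on the reals given by
  weight functions: infimum of the transport cost over all couplings (which are
  necessarily finitely supported).\<close>
definition W1 :: "(real \<Rightarrow> real) \<Rightarrow> (real \<Rightarrow> real) \<Rightarrow> real" where
  "W1 \<mu> \<nu> = Inf {(\<Sum>p\<in>{p. g p \<noteq> 0}. \<bar>fst p - snd p\<bar> * g p) | g.
      finite {p. g p \<noteq> 0} \<and> (\<forall>p. 0 \<le> g p) \<and>
      (\<forall>x. (\<Sum>y\<in>{y. g (x,y) \<noteq> 0}. g (x,y)) = \<mu> x) \<and>
      (\<forall>y. (\<Sum>x\<in>{x. g (x,y) \<noteq> 0}. g (x,y)) = \<nu> y)}"

text \<open>Minimal gap between distinct eigenvalues; +infinity if there is only one.\<close>
definition gap :: "complex^'n^'n \<Rightarrow> ereal" where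
  "gap H = Inf {ereal \<bar>l - m\<bar> | l m. l \<in> spec H \<and> m \<in> spec H \<and> l \<noteq> m}"

definition Ph :: "complex^'n^'n \<Rightarrow> complex^'n^'n \<Rightarrow> (nat \<Rightarrow> real) \<Rightarrow> real \<Rightarrow> nat \<Rightarrow> complex^'n^'n" where
  "Ph H \<Delta> lam t h = orth_proj (span (\<Union>{eigenspace (H + t *\<^sub>R \<Delta>) \<mu> | \<mu>.
      \<mu> \<in> spec (H + t *\<^sub>R \<Delta>) \<and> \<bar>\<mu> - lam h\<bar> \<le> \<bar>t\<bar> * spec_norm \<Delta>}))"

definition Pcum :: "complex^'n^'n \<Rightarrow> complex^'n^'n \<Rightarrow> (nat \<Rightarrow> real) \<Rightarrow> real \<Rightarrow> nat \<Rightarrow> complex^'n^'n" where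
  "Pcum H \<Delta> lam t h = (\<Sum>j\<in>{1..h}. Ph H \<Delta> lam t j)"

end

theory Submission
  imports Defs
begin

(* Diagonalise H and H + t Delta in orthonormal eigenbases (the spectral theorem is proved
   variationally). Each eigenvalue of H + t Delta lies within eps = |t| ||Delta||_2 of an
   eigenvalue of H, and because eps < gamma(H)/2 that eigenvalue lambda_j is unique; so the
   eigenvectors of H + t Delta fall into clusters labelled by j, and <f, P_[h](t) f> is the
   f-weight C_h of the clusters 1..h, while <f, P_[h] f> = A_h = mu_f^H({lambda_1..lambda_h}).
   The monotone (quantile) coupling of the masses of mu_f^H at the lambda_j with the cluster
   weights moves mass only between the points lambda_j, and across the gap (lambda_h, lambda_(h+1))
   it moves exactly |A_h - C_h|. Spreading each cluster's mass over its actual eigenvalues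
   moves every unit of mass by at most eps more. *)

lemma cinner_add_left: "cinner (x + y) z = cinner x z + cinner y z"
  by (simp add: cinner_def distrib_right sum.distrib)

lemma cinner_add_right: "cinner x (y + z) = cinner x y + cinner x z"
  by (simp add: cinner_def distrib_left sum.distrib)

lemma cinner_diff_right: "cinner x (y - z) = cinner x y - cinner x z"
  by (simp add: cinner_def right_diff_distrib sum_subtractf)

lemma cinner_scale_left: "cinner (c *s x) y = cnj c * cinner x y"
  by (simp add: cinner_def sum_distrib_left mult_ac)

lemma cinner_scale_right: "cinner x (c *s y) = c * cinner x y"
  by (simp add: cinner_def sum_distrib_left mult_ac)

lemma cinner_scaleR_left: "cinner (r *\<^sub>R x) y = of_real r * cinner x y"
  unfolding cinner_def vector_scaleR_component by (simp add: scaleR_conv_of_real sum_distrib_left mult_ac)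

lemma cinner_scaleR_right: "cinner x (r *\<^sub>R y) = of_real r * cinner x y"
  unfolding cinner_def vector_scaleR_component by (simp add: scaleR_conv_of_real sum_distrib_left mult_ac)

lemma cinner_sum_right: "cinner x (sum g A) = (\<Sum>a\<in>A. cinner x (g a))"
  by (simp add: cinner_def sum_component sum_distrib_left sum.swap[of _ A])

lemma cinner_commute: "cinner y x = cnj (cinner x y)"
  by (simp add: cinner_def mult.commute)

lemma cinner_sum_left: "cinner (sum g A) x = (\<Sum>a\<in>A. cinner (g a) x)"
  by (simp add: cinner_commute[of _ x] cinner_sum_right cnj_sum)

lemma cinner_zero_left [simp]: "cinner 0 x = 0"
  by (simp add: cinner_def)

lemma cinner_zero_right [simp]: "cinner x 0 = 0"
  by (simp add: cinner_def)

lemma cinner_self: "cinner x x = of_real (norm x ^ 2)"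
proof -
  have "norm x ^ 2 = (\<Sum>i\<in>UNIV. cmod (x$i) ^ 2)"
    by (simp add: norm_vec_def L2_set_def sum_nonneg)
  then show ?thesis
    by (simp add: cinner_def complex_norm_square mult.commute flip: of_real_power)
qed

lemma cinner_mult_cinner_commute: "cinner u x * cinner x u = of_real (cmod (cinner u x) ^ 2)"
  by (simp add: cinner_commute[of x u] complex_norm_square flip: of_real_power)

lemma hermitian_cinner_adjoint:
  assumes "hermitian H"
  shows "cinner x (H *v y) = cinner (H *v x) y"
proof -
  have H: "cnj (H$j$i) = H$i$j" for i j
    using assms unfolding hermitian_def by (metis complex_cnj_cnj)
  have "cinner x (H *v y) = (\<Sum>i\<in>UNIV. \<Sum>j\<in>UNIV. cnj (x$i) * H$i$j * y$j)"
    by (simp add: cinner_def matrix_vector_mult_def sum_distrib_left mult_ac)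
  also have "\<dots> = (\<Sum>j\<in>UNIV. \<Sum>i\<in>UNIV. cnj (x$i) * H$i$j * y$j)"
    by (rule sum.swap)
  also have "\<dots> = cinner (H *v x) y"
    unfolding cinner_def matrix_vector_mult_def
    by (simp only: vec_lambda_beta cnj_sum complex_cnj_mult H sum_distrib_right) (simp add: mult_ac)
  finally show ?thesis .
qed

lemma hermitian_add: "hermitian A \<Longrightarrow> hermitian B \<Longrightarrow> hermitian (A + B)"
  unfolding hermitian_def by (metis complex_cnj_add vector_add_component)

lemma hermitian_scaleR: "hermitian A \<Longrightarrow> hermitian (r *\<^sub>R A)"
  unfolding hermitian_def vector_scaleR_component by (metis complex_cnj_complex_of_real complex_cnj_mult scaleR_conv_of_real)

lemma scalar_mult_of_real: "of_real r *s x = r *\<^sub>R (x :: complex^'n)"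
  unfolding vec_eq_iff vector_scaleR_component vector_smult_component by (simp add: scaleR_conv_of_real)

lemma matrix_vector_mult_scaleR_right: "A *v (r *\<^sub>R x) = r *\<^sub>R (A *v (x :: complex^'n))"
  by (rule linear_scale[OF matrix_vector_mul_linear])

definition quad_form :: "complex^'n^'n \<Rightarrow> complex^'n \<Rightarrow> real" where
  "quad_form M x = Re (cinner x (M *v x))"

lemma hermitian_cinner_quad_form:
  assumes "hermitian M"
  shows "cinner x (M *v x) = of_real (quad_form M x)"
proof -
  have "cnj (cinner x (M *v x)) = cinner x (M *v x)"
    using hermitian_cinner_adjoint[OF assms, of x x] cinner_commute[of "M *v x" x] by simp
  then have "Im (cinner x (M *v x)) = 0"
    by (metis cnj.sel(2) neg_equal_zero)
  then show ?thesis
    by (simp add: quad_form_def complex_eq_iff)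
qed

lemma quad_form_scaleR: "quad_form M (r *\<^sub>R x) = r\<^sup>2 * quad_form M x"
  by (simp add: quad_form_def matrix_vector_mult_scaleR_right cinner_scaleR_left cinner_scaleR_right power2_eq_square)

lemma nonpos_if_dominated_by_square:
  fixes a b :: real
  assumes "\<And>s. s > 0 \<Longrightarrow> a * s + b * s\<^sup>2 \<le> 0"
  shows "a \<le> 0"
proof (rule ccontr)
  assume "\<not> a \<le> 0"
  define s where "s = a / (\<bar>b\<bar> + 1)"
  have s: "s > 0" using \<open>\<not> a \<le> 0\<close> by (simp add: s_def)
  have "\<bar>b\<bar> * s = a * (\<bar>b\<bar> / (\<bar>b\<bar> + 1))"
    by (simp add: s_def)
  also have "\<dots> < a * 1"
    using \<open>\<not> a \<le> 0\<close> by (intro mult_strict_left_mono) auto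
  finally have "\<bar>b\<bar> * s < a" by simp
  moreover have "- \<bar>b\<bar> * s \<le> b * s"
    using s by (intro mult_right_mono) auto
  ultimately have "0 < (a + b * s) * s"
    using s by (intro mult_pos_pos) auto
  then show False
    using assms[OF s] by (simp add: power2_eq_square algebra_simps)
qed

lemma quad_form_le_scaled_max:
  assumes W: "subspace W" and maximal: "\<And>y. y \<in> W \<Longrightarrow> norm y = 1 \<Longrightarrow> quad_form M y \<le> l"
    and z: "z \<in> W"
  shows "quad_form M z \<le> l * norm z ^ 2"
proof (cases "z = 0")
  case True
  then show ?thesis by (simp add: quad_form_def)
next
  case False
  have "quad_form M ((1 / norm z) *\<^sub>R z) \<le> l"
    using False z W by (intro maximal subspace_scale) auto
  then show ?thesis
    using False by (simp add: quad_form_scaleR field_simps power2_eq_square)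
qed

lemma quad_form_add_scaleR:
  assumes "hermitian M"
  shows "quad_form M (v + s *\<^sub>R w) = quad_form M v + 2 * s * Re (cinner v (M *v w)) + s\<^sup>2 * quad_form M w"
proof -
  have "Re (cinner w (M *v v)) = Re (cinner v (M *v w))"
    using hermitian_cinner_adjoint[OF assms, of w v] cinner_commute[of "M *v w" v] by simp
  then show ?thesis
    by (simp add: quad_form_def matrix_vector_right_distrib matrix_vector_mult_scaleR_right cinner_add_left
        cinner_add_right cinner_scaleR_left cinner_scaleR_right power2_eq_square algebra_simps)
qed

lemma norm_add_scaleR_orthogonal:
  assumes "cinner v w = 0"
  shows "norm (v + s *\<^sub>R w) ^ 2 = norm v ^ 2 + s\<^sup>2 * norm w ^ 2"
proof -
  have "cinner w v = 0"
    using assms by (simp add: cinner_commute[of w v])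
  then have "cinner (v + s *\<^sub>R w) (v + s *\<^sub>R w) = of_real (norm v ^ 2 + s\<^sup>2 * norm w ^ 2)"
    using assms by (simp add: cinner_add_left cinner_add_right cinner_scaleR_left cinner_scaleR_right
        cinner_self[of v] cinner_self[of w] power2_eq_square)
  then show ?thesis
    unfolding cinner_self of_real_eq_iff .
qed

(* Moving from the maximiser v towards the residual w = M v - lambda v raises the quadratic form
   by 2 s |w|^2 to first order in s, while the norm changes only to second order; hence w = 0. *)

lemma hermitian_maximizer_eigenvector:
  fixes M :: "complex^'n^'n"
  assumes herm: "hermitian M" and W: "subspace W" and inv: "\<And>y. y \<in> W \<Longrightarrow> M *v y \<in> W"
    and v: "v \<in> W" "norm v = 1"
    and maximal: "\<And>y. y \<in> W \<Longrightarrow> norm y = 1 \<Longrightarrow> quad_form M y \<le> quad_form M v"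
  shows "M *v v = of_real (quad_form M v) *s v"
proof -
  define l where "l = quad_form M v"
  define w where "w = M *v v - l *\<^sub>R v"
  have wW: "w \<in> W"
    unfolding w_def using W v inv by (intro subspace_diff subspace_scale) auto
  have vv: "cinner v v = 1"
    using v(2) by (simp add: cinner_self)
  have vw: "cinner v w = 0"
    using hermitian_cinner_quad_form[OF herm, of v]
    by (simp add: w_def cinner_diff_right cinner_scaleR_right vv l_def)
  have "M *v v = w + l *\<^sub>R v"
    by (simp add: w_def)
  then have vMw: "Re (cinner v (M *v w)) = norm w ^ 2"
    using vw by (simp add: hermitian_cinner_adjoint[OF herm] cinner_add_left cinner_scaleR_left cinner_self)
  have "2 * norm w ^ 2 * s + (quad_form M w - l * norm w ^ 2) * s\<^sup>2 \<le> 0" if "s > 0" for s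
  proof -
    have "v + s *\<^sub>R w \<in> W"
      using W v wW by (intro subspace_add subspace_scale) auto
    then have "quad_form M (v + s *\<^sub>R w) \<le> l * norm (v + s *\<^sub>R w) ^ 2"
      unfolding l_def using quad_form_le_scaled_max[OF W maximal] by simp
    also have "norm (v + s *\<^sub>R w) ^ 2 = 1 + s\<^sup>2 * norm w ^ 2"
      using norm_add_scaleR_orthogonal[OF vw] v(2) by simp
    finally have "quad_form M (v + s *\<^sub>R w) \<le> l * (1 + s\<^sup>2 * norm w ^ 2)" .
    moreover have "quad_form M (v + s *\<^sub>R w) = l + 2 * s * norm w ^ 2 + s\<^sup>2 * quad_form M w"
      by (simp add: quad_form_add_scaleR[OF herm] vMw l_def)
    ultimately show ?thesis
      by (simp add: algebra_simps)
  qed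
  then have "2 * norm w ^ 2 \<le> 0"
    by (rule nonpos_if_dominated_by_square)
  then have "w = 0" by simp
  then show ?thesis
    by (simp add: w_def l_def scalar_mult_of_real)
qed

lemma hermitian_invariant_subspace_eigenvector:
  fixes M :: "complex^'n^'n"
  assumes herm: "hermitian M" and W: "subspace W" and inv: "\<And>y. y \<in> W \<Longrightarrow> M *v y \<in> W"
    and x: "x \<in> W" "x \<noteq> 0"
  shows "\<exists>v\<in>W. norm v = 1 \<and> M *v v = of_real (quad_form M v) *s v"
proof -
  let ?S = "W \<inter> sphere 0 1"
  have "compact ?S"
    using W by (intro closed_Int_compact closed_subspace compact_sphere)
  moreover have "(1 / norm x) *\<^sub>R x \<in> ?S"
    using x W by (simp add: subspace_scale)
  moreover have "continuous_on ?S (quad_form M)"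
    unfolding quad_form_def cinner_def matrix_vector_mult_def by (intro continuous_intros)
  ultimately obtain v where v: "v \<in> ?S" and max: "\<And>y. y \<in> ?S \<Longrightarrow> quad_form M y \<le> quad_form M v"
    using continuous_attains_sup[of ?S "quad_form M"] by blast
  then show ?thesis
    using hermitian_maximizer_eigenvector[OF herm W inv] by auto
qed

definition orthonormal :: "(complex^'n) set \<Rightarrow> bool" where
  "orthonormal B \<longleftrightarrow> (\<forall>u\<in>B. \<forall>v\<in>B. cinner u v = (if u = v then 1 else 0))"

(* Induction on the real dimension: the orthogonal complement of an eigenvector inside an
   invariant subspace is again invariant. *)
lemma hermitian_invariant_subspace_eigenbasis:
  fixes M :: "complex^'n^'n"
  assumes herm: "hermitian M"
  shows "subspace W \<Longrightarrow> (\<And>y. y \<in> W \<Longrightarrow> M *v y \<in> W) \<Longrightarrow>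
    \<exists>B. finite B \<and> B \<subseteq> W \<and> orthonormal B \<and> (\<forall>u\<in>B. M *v u = of_real (quad_form M u) *s u)
      \<and> (\<forall>x\<in>W. (\<forall>u\<in>B. cinner u x = 0) \<longrightarrow> x = 0)"
proof (induction "dim W" arbitrary: W rule: less_induct)
  case less
  show ?case
  proof (cases "\<exists>x\<in>W. x \<noteq> 0")
    case False
    then show ?thesis
      by (intro exI[of _ "{}"]) (auto simp: orthonormal_def)
  next
    case True
    then obtain v where v: "v \<in> W" "norm v = 1" and Mv: "M *v v = of_real (quad_form M v) *s v"
      using hermitian_invariant_subspace_eigenvector[OF herm less.prems] by blast
    have vv: "cinner v v = 1"
      using v(2) by (simp add: cinner_self)
    define W' where "W' = {y\<in>W. cinner v y = 0}"
    have W': "subspace W'"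
      using less.prems(1) unfolding W'_def subspace_def by (simp add: cinner_add_right cinner_scaleR_right)
    have inv': "M *v y \<in> W'" if "y \<in> W'" for y
      using that less.prems(2) hermitian_cinner_adjoint[OF herm, of v y]
      by (simp add: W'_def Mv cinner_scale_left)
    have "v \<notin> W'"
      using vv by (simp add: W'_def)
    then have "W' \<subset> W"
      using v(1) by (auto simp: W'_def)
    then have "dim W' < dim W"
      by (metis W' less.prems(1) dim_psubset span_eq_iff)
    then obtain B where B: "finite B" "B \<subseteq> W'" "orthonormal B"
      "\<forall>u\<in>B. M *v u = of_real (quad_form M u) *s u" "\<forall>x\<in>W'. (\<forall>u\<in>B. cinner u x = 0) \<longrightarrow> x = 0"
      using less.hyps[OF _ W' inv'] by blast
    have vB: "cinner v u = 0" "cinner u v = 0" if "u \<in> B" for u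
      using that B(2) cinner_commute[of u v] by (auto simp: W'_def)
    show ?thesis
    proof (intro exI[of _ "insert v B"] conjI)
      show "orthonormal (insert v B)"
        using B(3) vB vv by (auto simp: orthonormal_def)
      show "\<forall>x\<in>W. (\<forall>u\<in>insert v B. cinner u x = 0) \<longrightarrow> x = 0"
        using B(5) by (auto simp: W'_def)
    qed (use B v Mv W'_def in auto)
  qed
qed

locale eigenbasis =
  fixes M :: "complex^'n^'n" and B :: "(complex^'n) set" and ev :: "complex^'n \<Rightarrow> real"
  assumes hermitian: "hermitian M"
    and finite_basis: "finite B"
    and orthonormal_basis: "orthonormal B"
    and eigenvector: "u \<in> B \<Longrightarrow> M *v u = of_real (ev u) *s u"
    and complete: "(\<And>u. u \<in> B \<Longrightarrow> cinner u x = 0) \<Longrightarrow> x = 0"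

lemma eigenbasis_exists:
  assumes "hermitian M"
  shows "\<exists>B ev. eigenbasis M B ev"
proof -
  obtain B where "finite B" "orthonormal B" "\<forall>u\<in>B. M *v u = of_real (quad_form M u) *s u"
    "\<forall>x. (\<forall>u\<in>B. cinner u x = 0) \<longrightarrow> x = 0"
    using hermitian_invariant_subspace_eigenbasis[OF assms, of UNIV] by auto
  then have "eigenbasis M B (quad_form M)"
    using assms by unfold_locales auto
  then show ?thesis by blast
qed

lemma matrix_vector_mult_sum_left: "(\<Sum>u\<in>C. A u) *v x = (\<Sum>u\<in>C. A u *v x)"
  by (induction C rule: infinite_finite_induct) (simp_all add: matrix_vector_mult_add_rdistrib)

definition projection_onto :: "(complex^'n) set \<Rightarrow> complex^'n^'n" where
  "projection_onto C = (\<Sum>u\<in>C. \<chi> i j. u$i * cnj (u$j))"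

lemma projection_onto_mult: "projection_onto C *v x = (\<Sum>u\<in>C. cinner u x *s u)"
proof -
  have "(\<chi> i j. u$i * cnj (u$j)) *v x = cinner u x *s u" for u
    by (simp add: vec_eq_iff matrix_vector_mult_def cinner_def sum_distrib_left mult_ac)
  then show ?thesis
    by (simp add: projection_onto_def matrix_vector_mult_sum_left)
qed

lemma cinner_projection_onto_self:
  "cinner x (projection_onto C *v x) = of_real (\<Sum>u\<in>C. cmod (cinner u x) ^ 2)"
  by (simp add: projection_onto_mult cinner_sum_right cinner_scale_right mult.commute
      cinner_mult_cinner_commute)

lemma orthonormal_cinner_sum:
  assumes "orthonormal C" "finite C" "u \<in> C"
  shows "cinner u (\<Sum>v\<in>C. c v *s v) = c u"
proof -
  have "cinner u (\<Sum>v\<in>C. c v *s v) = (\<Sum>v\<in>C. if v = u then c v else 0)"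
    using assms(1,3) by (intro trans[OF cinner_sum_right] sum.cong)
      (auto simp: cinner_scale_right orthonormal_def)
  then show ?thesis
    using assms(2,3) by simp
qed

lemma orthonormal_subset: "orthonormal B \<Longrightarrow> C \<subseteq> B \<Longrightarrow> orthonormal C"
  unfolding orthonormal_def by blast

lemma orth_proj_eqI:
  fixes S :: "(complex^'n) set"
  assumes S: "subspace S" and range: "\<And>x. P *v x \<in> S"
    and orth: "\<And>x y. y \<in> S \<Longrightarrow> cinner y (x - P *v x) = 0"
  shows "orth_proj S = P"
  unfolding orth_proj_def
proof (rule the_equality)
  fix P' assume P': "\<forall>x. P' *v x \<in> S \<and> (\<forall>y\<in>S. cinner y (x - P' *v x) = 0)"
  show "P' = P"
    unfolding matrix_eq
  proof
    fix x
    define d where "d = P' *v x - P *v x"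
    have "d \<in> S"
      unfolding d_def using P' range S by (intro subspace_diff) auto
    then have "cinner d (x - P *v x) = 0" "cinner d (x - P' *v x) = 0"
      using P' orth by auto
    moreover have "d = (x - P *v x) - (x - P' *v x)"
      by (simp add: d_def)
    ultimately have "cinner d d = 0"
      by (metis cinner_diff_right diff_self)
    then show "P' *v x = P *v x"
      by (simp add: cinner_self d_def)
  qed
qed (use range orth in auto)

lemma subspace_eigenspace: "subspace (eigenspace M l)"
  unfolding subspace_def eigenspace_def
  by (simp add: matrix_vector_right_distrib matrix_vector_mult_scaleR_right scalar_mult_of_real algebra_simps)

context eigenbasis
begin

lemma expansion: "x = (\<Sum>u\<in>B. cinner u x *s u)"
proof -
  have "x - (\<Sum>u\<in>B. cinner u x *s u) = 0"
    by (rule complete) (simp add: cinner_diff_right orthonormal_cinner_sum[OF orthonormal_basis finite_basis])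
  then show ?thesis by simp
qed

lemma parseval: "norm x ^ 2 = (\<Sum>u\<in>B. cmod (cinner u x) ^ 2)"
proof -
  have "of_real (norm x ^ 2) = cinner x (projection_onto B *v x)"
    by (simp only: projection_onto_mult flip: expansion cinner_self)
  then show ?thesis
    unfolding cinner_projection_onto_self of_real_eq_iff .
qed

lemma cinner_eigenvector:
  assumes "u \<in> B"
  shows "cinner u (M *v x) = of_real (ev u) * cinner u x"
  using hermitian_cinner_adjoint[OF hermitian, of u x] by (simp add: eigenvector[OF assms] cinner_scale_left)

lemma cinner_eigenspace:
  assumes "y \<in> eigenspace M l" "u \<in> B" "ev u \<noteq> l"
  shows "cinner u y = 0"
proof -
  have "of_real (ev u) * cinner u y = cinner u (M *v y)"
    by (simp add: cinner_eigenvector[OF assms(2)])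
  also have "\<dots> = of_real l * cinner u y"
    using assms(1) by (simp add: eigenspace_def cinner_scale_right)
  finally show ?thesis
    using assms(3) by auto
qed

lemma spec_eq: "spec M = ev ` B"
proof
  show "spec M \<subseteq> ev ` B"
  proof
    fix l assume "l \<in> spec M"
    then obtain v where "v \<noteq> 0" "v \<in> eigenspace M l"
      by (auto simp: spec_def eigenspace_def)
    then show "l \<in> ev ` B"
      using complete cinner_eigenspace by blast
  qed
  have "u \<noteq> 0" if "u \<in> B" for u
    using orthonormal_basis that unfolding orthonormal_def by force
  then show "ev ` B \<subseteq> spec M"
    using eigenvector by (auto simp: spec_def)
qed

lemma orth_proj_span_eigenspaces:
  "orth_proj (span (\<Union>{eigenspace M \<mu> |\<mu>. \<mu> \<in> spec M \<and> P \<mu>})) = projection_onto {u\<in>B. P (ev u)}"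
    (is "orth_proj ?S = projection_onto ?C")
proof (rule orth_proj_eqI)
  show "subspace ?S"
    by (rule subspace_span)
  have "c *s u \<in> ?S" if "u \<in> ?C" for u c
  proof -
    have "c *s u \<in> eigenspace M (ev u)"
      using eigenvector that by (simp add: eigenspace_def vector_scalar_commute vector_smult_assoc mult.commute)
    moreover have "ev u \<in> spec M"
      using that spec_eq by auto
    ultimately show ?thesis
      using that by (intro span_base) blast
  qed
  then show "projection_onto ?C *v x \<in> ?S" for x
    unfolding projection_onto_mult by (rule subspace_sum[OF subspace_span]) blast
  fix x y assume y: "y \<in> ?S"
  have "cinner u y = 0" if u: "u \<in> B - ?C" for u
    using y
  proof (induction rule: span_induct)
    case base
    show ?case
      by (simp add: subspace_def cinner_add_right cinner_scaleR_right)
  next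
    case (step z)
    then obtain \<mu> where z: "z \<in> eigenspace M \<mu>" and "P \<mu>"
      by blast
    then have "ev u \<noteq> \<mu>"
      using u by auto
    then show ?case
      using cinner_eigenspace[OF z] u by simp
  qed
  moreover have "cinner u (x - projection_onto ?C *v x) = 0" if "u \<in> ?C" for u
    using that finite_subset[OF _ finite_basis]
      orthonormal_cinner_sum[OF orthonormal_subset[OF orthonormal_basis]]
    by (simp add: projection_onto_mult cinner_diff_right)
  ultimately have "cnj (cinner u y) * cinner u (x - projection_onto ?C *v x) = 0" if "u \<in> B" for u
    using that by (cases "P (ev u)") auto
  then show "cinner y (x - projection_onto ?C *v x) = 0"
    by (subst expansion[of y]) (simp add: cinner_sum_left cinner_scale_left sum.neutral)
qed

lemma power_spectrum_eq: "power_spectrum M f l = (\<Sum>u\<in>{u\<in>B. ev u = l}. cmod (cinner u f) ^ 2)"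
proof (cases "l \<in> spec M")
  case True
  then have "{eigenspace M \<mu> |\<mu>. \<mu> \<in> spec M \<and> \<mu> = l} = {eigenspace M l}"
    by blast
  then have "eigenproj M l = projection_onto {u\<in>B. ev u = l}"
    using orth_proj_span_eigenspaces[of "\<lambda>\<mu>. \<mu> = l"]
    by (simp add: eigenproj_def span_eq_iff[THEN iffD2, OF subspace_eigenspace])
  then show ?thesis
    using True by (simp add: power_spectrum_def cinner_projection_onto_self)
next
  case False
  then have "{u\<in>B. ev u = l} = {}"
    using spec_eq by auto
  then show ?thesis
    using False unfolding power_spectrum_def by (simp only: sum.empty if_False)
qed

end

lemma norm_matrix_vector_mult_le: "norm (A *v x) \<le> spec_norm A * norm x"
  unfolding spec_norm_def by (rule onorm[OF matrix_vector_mul_bounded_linear])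

lemma matrix_vector_mult_scaleR_left: "(r *\<^sub>R A) *v x = r *\<^sub>R (A *v (x :: complex^'n))"
  by (simp add: vec_eq_iff matrix_vector_mult_def scaleR_sum_right)

lemma spec_norm_scaleR: "spec_norm (r *\<^sub>R A) = \<bar>r\<bar> * spec_norm (A :: complex^'n^'n)"
  unfolding spec_norm_def matrix_vector_mult_scaleR_left
  by (rule onorm_scaleR[OF matrix_vector_mul_bounded_linear])

context eigenbasis
begin

lemma norm_shifted_lower_bound:
  assumes "\<And>u. u \<in> B \<Longrightarrow> \<delta> \<le> \<bar>ev u - \<mu>\<bar>" and "0 \<le> \<delta>"
  shows "\<delta> * norm x \<le> norm (M *v x - \<mu> *\<^sub>R x)"
proof -
  have "(\<delta> * norm x)\<^sup>2 = (\<Sum>u\<in>B. \<delta>\<^sup>2 * cmod (cinner u x) ^ 2)"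
    by (simp add: power_mult_distrib parseval sum_distrib_left)
  also have "\<dots> \<le> (\<Sum>u\<in>B. (ev u - \<mu>)\<^sup>2 * cmod (cinner u x) ^ 2)"
    using assms by (intro sum_mono mult_right_mono) (auto simp: abs_le_square_iff[symmetric])
  also have "\<dots> = (norm (M *v x - \<mu> *\<^sub>R x))\<^sup>2"
    by (simp add: parseval cinner_diff_right cinner_scaleR_right cinner_eigenvector
        flip: left_diff_distrib of_real_diff) (simp add: norm_mult power_mult_distrib flip: of_real_diff)
  finally show ?thesis
    by (rule power2_le_imp_le) simp
qed

end

lemma eigenvalue_perturbation:
  assumes H: "hermitian H" and \<mu>: "\<mu> \<in> spec (H + E)"
  shows "\<exists>l\<in>spec H. \<bar>l - \<mu>\<bar> \<le> spec_norm E"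
proof -
  obtain B ev where eb: "eigenbasis H B ev"
    using eigenbasis_exists[OF H] by blast
  interpret eigenbasis H B ev by (fact eb)
  obtain x where x: "x \<noteq> 0" and Ex: "(H + E) *v x = \<mu> *\<^sub>R x"
    using \<mu> by (auto simp: spec_def scalar_mult_of_real)
  have "B \<noteq> {}"
    using complete x by blast
  then obtain v where v: "v \<in> B" and min: "\<And>u. u \<in> B \<Longrightarrow> \<bar>ev v - \<mu>\<bar> \<le> \<bar>ev u - \<mu>\<bar>"
    using arg_min_if_finite[OF finite_basis, of "\<lambda>u. \<bar>ev u - \<mu>\<bar>"] by (meson not_le)
  have "\<bar>ev v - \<mu>\<bar> * norm x \<le> norm (H *v x - \<mu> *\<^sub>R x)"
    using min by (intro norm_shifted_lower_bound) auto
  also have "H *v x - \<mu> *\<^sub>R x = - (E *v x)"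
    unfolding Ex[symmetric] by (simp add: matrix_vector_mult_add_rdistrib)
  also have "norm (- (E *v x)) \<le> spec_norm E * norm x"
    unfolding norm_minus_cancel by (rule norm_matrix_vector_mult_le)
  finally have "\<bar>ev v - \<mu>\<bar> \<le> spec_norm E"
    using x by simp
  then show ?thesis
    using v spec_eq by auto
qed

lemma spec_eq_if_within_half_gap:
  assumes "l \<in> spec H" "l' \<in> spec H" "\<bar>\<mu> - l\<bar> \<le> \<epsilon>" "\<bar>\<mu> - l'\<bar> \<le> \<epsilon>"
    and gap: "ereal \<epsilon> < gap H / 2"
  shows "l = l'"
proof (rule ccontr)
  assume "l \<noteq> l'"
  then have "gap H \<le> ereal \<bar>l - l'\<bar>"
    unfolding gap_def using assms(1,2) by (intro Inf_lower) blast
  also have "\<dots> \<le> ereal (2 * \<epsilon>)"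
    using assms(3,4) by simp
  finally show False
    using gap by (cases "gap H") auto
qed

lemma Ph_eq_projection_onto:
  assumes "eigenbasis (H + s *\<^sub>R \<Delta>) B ev"
  shows "Ph H \<Delta> lam s j = projection_onto {u\<in>B. \<bar>ev u - lam j\<bar> \<le> \<bar>s\<bar> * spec_norm \<Delta>}"
  unfolding Ph_def by (rule eigenbasis.orth_proj_span_eigenspaces[OF assms])

lemma cinner_Pcum:
  assumes "eigenbasis (H + s *\<^sub>R \<Delta>) B ev"
  shows "cinner f (Pcum H \<Delta> lam s h *v f)
    = of_real (\<Sum>j\<in>{1..h}. \<Sum>u\<in>{u\<in>B. \<bar>ev u - lam j\<bar> \<le> \<bar>s\<bar> * spec_norm \<Delta>}. cmod (cinner u f) ^ 2)"
  by (simp add: Pcum_def matrix_vector_mult_sum_left cinner_sum_right cinner_projection_onto_self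
      Ph_eq_projection_onto[OF assms])

definition interval_overlap :: "real \<Rightarrow> real \<Rightarrow> real \<Rightarrow> real \<Rightarrow> real" where
  "interval_overlap p q r s = max 0 (min q s - max p r)"

lemma interval_overlap_commute: "interval_overlap p q r s = interval_overlap r s p q"
  by (simp add: interval_overlap_def min.commute max.commute)

lemma interval_overlap_nonneg: "0 \<le> interval_overlap p q r s"
  by (simp add: interval_overlap_def)

lemma interval_overlap_eq_clamp_diff:
  "p \<le> q \<Longrightarrow> r \<le> s \<Longrightarrow> interval_overlap p q r s = max p (min q s) - max p (min q r)"
  by (auto simp: interval_overlap_def max_def min_def)

lemma sum_interval_overlap_telescope:
  fixes s :: "nat \<Rightarrow> real"
  assumes mono: "\<And>j. s j \<le> s (Suc j)" and "p \<le> q" and "l \<le> n"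
  shows "(\<Sum>j\<in>{Suc l..n}. interval_overlap p q (s (j - 1)) (s j)) = interval_overlap p q (s l) (s n)"
proof -
  define F where "F j = max p (min q (s j))" for j
  have "s (j - 1) \<le> s j" if "1 \<le> j" for j
    using mono[of "j - 1"] that by simp
  then have "(\<Sum>j\<in>{Suc l..n}. interval_overlap p q (s (j - 1)) (s j)) = (\<Sum>j\<in>{Suc l..n}. F j - F (j - 1))"
    using \<open>p \<le> q\<close> by (intro sum.cong) (auto simp: F_def interval_overlap_eq_clamp_diff)
  also have "\<dots> = F n - F l"
    using \<open>l \<le> n\<close> by (induction n) (auto simp: le_Suc_eq)
  also have "\<dots> = interval_overlap p q (s l) (s n)"
    using lift_Suc_mono_le[of s, OF mono \<open>l \<le> n\<close>] \<open>p \<le> q\<close> by (simp add: F_def interval_overlap_eq_clamp_diff)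
  finally show ?thesis .
qed

definition cumsum :: "(nat \<Rightarrow> real) \<Rightarrow> nat \<Rightarrow> real" where
  "cumsum a i = (\<Sum>k\<in>{1..i}. a k)"

lemma cumsum_0 [simp]: "cumsum a 0 = 0"
  by (simp add: cumsum_def)

lemma cumsum_pred: "1 \<le> i \<Longrightarrow> cumsum a i = cumsum a (i - 1) + a i"
  by (cases i) (simp_all add: cumsum_def)

lemma cumsum_mono: "(\<And>k. 0 \<le> a k) \<Longrightarrow> i \<le> j \<Longrightarrow> cumsum a i \<le> cumsum a j"
  unfolding cumsum_def by (intro sum_mono2) auto

lemma cumsum_Suc_mono: "(\<And>k. 0 \<le> a k) \<Longrightarrow> cumsum a i \<le> cumsum a (Suc i)"
  by (simp add: cumsum_mono)

lemma cumsum_nonneg: "(\<And>k. 0 \<le> a k) \<Longrightarrow> 0 \<le> cumsum a i"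
  using cumsum_mono[of a 0 i] by simp

(* Lay the masses a_1, a_2, ... and c_1, c_2, ... end to end on [0, total]; a_i and c_j are
   coupled by the length of the overlap of their intervals (the monotone coupling). *)
definition quantile_coupling :: "(nat \<Rightarrow> real) \<Rightarrow> (nat \<Rightarrow> real) \<Rightarrow> nat \<Rightarrow> nat \<Rightarrow> real" where
  "quantile_coupling a c i j =
    interval_overlap (cumsum a (i - 1)) (cumsum a i) (cumsum c (j - 1)) (cumsum c j)"

lemma quantile_coupling_swap: "quantile_coupling c a j i = quantile_coupling a c i j"
  by (simp add: quantile_coupling_def interval_overlap_commute)

lemma quantile_coupling_nonneg: "0 \<le> quantile_coupling a c i j"
  by (simp add: quantile_coupling_def interval_overlap_nonneg)

lemma quantile_coupling_row_sum:
  assumes a: "\<And>k. 0 \<le> a k" and c: "\<And>k. 0 \<le> c k" and total: "cumsum a m = cumsum c m"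
    and i: "i \<in> {1..m}"
  shows "(\<Sum>j\<in>{1..m}. quantile_coupling a c i j) = a i"
proof -
  have le: "cumsum a (i - 1) \<le> cumsum a i"
    using a by (simp add: cumsum_mono)
  have "(\<Sum>j\<in>{1..m}. quantile_coupling a c i j)
      = interval_overlap (cumsum a (i - 1)) (cumsum a i) (cumsum c 0) (cumsum c m)"
    unfolding quantile_coupling_def
    using sum_interval_overlap_telescope[of "cumsum c", OF cumsum_Suc_mono[OF c] le] by simp
  also have "\<dots> = a i"
    using i le cumsum_nonneg[of a "i - 1", OF a] cumsum_mono[of a i m, OF a] cumsum_pred[of i a]
    by (simp add: interval_overlap_def total)
  finally show ?thesis .
qed

lemma quantile_coupling_column_sum:
  assumes "\<And>k. 0 \<le> a k" and "\<And>k. 0 \<le> c k" and "cumsum a m = cumsum c m" and "j \<in> {1..m}"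
  shows "(\<Sum>i\<in>{1..m}. quantile_coupling a c i j) = c j"
  using quantile_coupling_row_sum[of c a m j] assms by (simp add: quantile_coupling_swap)

lemma quantile_coupling_crossing:
  assumes a: "\<And>k. 0 \<le> a k" and c: "\<And>k. 0 \<le> c k" and total: "cumsum a m = cumsum c m"
    and h: "h \<le> m"
  shows "(\<Sum>i\<in>{1..h}. \<Sum>j\<in>{Suc h..m}. quantile_coupling a c i j) = max 0 (cumsum a h - cumsum c h)"
proof -
  have le: "cumsum c h \<le> cumsum c m"
    using c h by (simp add: cumsum_mono)
  have "(\<Sum>j\<in>{Suc h..m}. quantile_coupling a c i j)
      = interval_overlap (cumsum c h) (cumsum c m) (cumsum a (i - 1)) (cumsum a i)" for i
    unfolding quantile_coupling_def
    using sum_interval_overlap_telescope[of "cumsum c", OF cumsum_Suc_mono[OF c] _ h]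
      cumsum_mono[of a "i - 1" i, OF a] by (simp add: interval_overlap_commute)
  then have "(\<Sum>i\<in>{1..h}. \<Sum>j\<in>{Suc h..m}. quantile_coupling a c i j)
      = interval_overlap (cumsum c h) (cumsum c m) (cumsum a 0) (cumsum a h)"
    using sum_interval_overlap_telescope[of "cumsum a", OF cumsum_Suc_mono[OF a] le] by simp
  also have "\<dots> = max 0 (cumsum a h - cumsum c h)"
    using cumsum_mono[of a h m, OF a h] cumsum_nonneg[of c h, OF c]
    by (simp add: interval_overlap_def total)
  finally show ?thesis .
qed

lemma sum_block_indicator:
  fixes g :: "nat \<Rightarrow> nat \<Rightarrow> real"
  assumes "h \<le> m"
  shows "(\<Sum>i\<in>{1..m}. \<Sum>j\<in>{1..m}. g i j * of_bool (i \<le> h \<and> h < j)) = (\<Sum>i\<in>{1..h}. \<Sum>j\<in>{Suc h..m}. g i j)"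
proof -
  have "{1..m} \<inter> {j. h < j} = {Suc h..m}" "{1..m} \<inter> {i. i \<le> h} = {1..h}"
    using assms by auto
  moreover have "g i j * of_bool (i \<le> h \<and> h < j) = of_bool (i \<le> h) * (g i j * of_bool (h < j))" for i j
    by simp
  ultimately show ?thesis
    by (simp only: sum_distrib_left[symmetric] sum_mult_of_bool_eq sum_of_bool_mult_eq finite_atLeastAtMost)
qed

lemma abs_diff_eq_sum_steps:
  fixes x :: "nat \<Rightarrow> real"
  assumes x: "mono_on {1..m} x" and i: "i \<in> {1..m}" and j: "j \<in> {1..m}"
  shows "\<bar>x i - x j\<bar> = (\<Sum>h\<in>{1..m-1}. (x (Suc h) - x h) * of_bool (min i j \<le> h \<and> h < max i j))"
proof -
  have "{1..m-1} \<inter> {h. min i j \<le> h \<and> h < max i j} = {min i j..<max i j}"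
    using i j by auto
  then have "(\<Sum>h\<in>{1..m-1}. (x (Suc h) - x h) * of_bool (min i j \<le> h \<and> h < max i j))
      = x (max i j) - x (min i j)"
    by (simp add: sum_Suc_diff')
  also have "\<dots> = \<bar>x i - x j\<bar>"
    using mono_onD[OF x i j] mono_onD[OF x j i] by (cases "i \<le> j") (auto simp: max_def min_def)
  finally show ?thesis ..
qed

(* |x_i - x_j| is the sum of the steps x_(h+1) - x_h between i and j; after exchanging the sums,
   step h is paid by the mass carried across it, which is |A_h - C_h| by
   quantile_coupling_crossing. *)
lemma quantile_coupling_cost:
  fixes x :: "nat \<Rightarrow> real"
  assumes a: "\<And>k. 0 \<le> a k" and c: "\<And>k. 0 \<le> c k" and total: "cumsum a m = cumsum c m"
    and x: "mono_on {1..m} x"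
  shows "(\<Sum>i\<in>{1..m}. \<Sum>j\<in>{1..m}. quantile_coupling a c i j * \<bar>x i - x j\<bar>)
    = (\<Sum>h\<in>{1..m-1}. (x (Suc h) - x h) * \<bar>cumsum a h - cumsum c h\<bar>)"
proof -
  let ?\<pi> = "quantile_coupling a c"
  have crossing: "(\<Sum>i\<in>{1..m}. \<Sum>j\<in>{1..m}. ?\<pi> i j * of_bool (min i j \<le> h \<and> h < max i j))
      = \<bar>cumsum a h - cumsum c h\<bar>" if h: "h \<in> {1..m-1}" for h
  proof -
    have split: "of_bool (min i j \<le> h \<and> h < max i j) = of_bool (i \<le> h \<and> h < j) + (of_bool (j \<le> h \<and> h < i) :: real)"
      for i j by auto
    have hm: "h \<le> m"
      using h by auto
    have upper: "(\<Sum>i\<in>{1..m}. \<Sum>j\<in>{1..m}. ?\<pi> i j * of_bool (i \<le> h \<and> h < j))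
        = max 0 (cumsum a h - cumsum c h)"
      unfolding sum_block_indicator[OF hm] by (rule quantile_coupling_crossing[OF a c total hm])
    have "(\<Sum>i\<in>{1..m}. \<Sum>j\<in>{1..m}. ?\<pi> i j * of_bool (j \<le> h \<and> h < i))
        = (\<Sum>j\<in>{1..m}. \<Sum>i\<in>{1..m}. quantile_coupling c a j i * of_bool (j \<le> h \<and> h < i))"
      by (subst sum.swap) (simp only: quantile_coupling_swap[of c a])
    also have "\<dots> = max 0 (cumsum c h - cumsum a h)"
      unfolding sum_block_indicator[OF hm] by (rule quantile_coupling_crossing[OF c a total[symmetric] hm])
    finally show ?thesis
      using upper by (simp add: split distrib_left sum.distrib del: sum_mult_of_bool_eq)
  qed
  have "(\<Sum>i\<in>{1..m}. \<Sum>j\<in>{1..m}. ?\<pi> i j * \<bar>x i - x j\<bar>)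
      = (\<Sum>i\<in>{1..m}. \<Sum>j\<in>{1..m}. \<Sum>h\<in>{1..m-1}.
          (x (Suc h) - x h) * (?\<pi> i j * of_bool (min i j \<le> h \<and> h < max i j)))"
    by (intro sum.cong refl)
      (simp add: abs_diff_eq_sum_steps[OF x] sum_distrib_left mult_ac del: sum_mult_of_bool_eq)
  also have "\<dots> = (\<Sum>h\<in>{1..m-1}. \<Sum>i\<in>{1..m}. \<Sum>j\<in>{1..m}.
          (x (Suc h) - x h) * (?\<pi> i j * of_bool (min i j \<le> h \<and> h < max i j)))"
    by (simp only: sum.swap[where B = "{1..m-1}"])
  also have "\<dots> = (\<Sum>h\<in>{1..m-1}. (x (Suc h) - x h) *
      (\<Sum>i\<in>{1..m}. \<Sum>j\<in>{1..m}. ?\<pi> i j * of_bool (min i j \<le> h \<and> h < max i j)))"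
    by (simp only: sum_distrib_left)
  also have "\<dots> = (\<Sum>h\<in>{1..m-1}. (x (Suc h) - x h) * \<bar>cumsum a h - cumsum c h\<bar>)"
    by (intro sum.cong refl) (simp only: crossing)
  finally show ?thesis .
qed

lemma W1_le_cost:
  assumes "finite {p. g p \<noteq> 0}" and "\<And>p. 0 \<le> g p"
    and "\<And>x. (\<Sum>y\<in>{y. g (x, y) \<noteq> 0}. g (x, y)) = \<mu> x"
    and "\<And>y. (\<Sum>x\<in>{x. g (x, y) \<noteq> 0}. g (x, y)) = \<nu> y"
  shows "W1 \<mu> \<nu> \<le> (\<Sum>p\<in>{p. g p \<noteq> 0}. \<bar>fst p - snd p\<bar> * g p)"
  unfolding W1_def
proof (rule cInf_lower)
  show "(\<Sum>p\<in>{p. g p \<noteq> 0}. \<bar>fst p - snd p\<bar> * g p) \<in> {\<Sum>p\<in>{p. g p \<noteq> 0}. \<bar>fst p - snd p\<bar> * g p | g.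
      finite {p. g p \<noteq> 0} \<and> (\<forall>p. 0 \<le> g p) \<and>
      (\<forall>x. (\<Sum>y\<in>{y. g (x,y) \<noteq> 0}. g (x,y)) = \<mu> x) \<and> (\<forall>y. (\<Sum>x\<in>{x. g (x,y) \<noteq> 0}. g (x,y)) = \<nu> y)}"
    using assms by blast
qed (rule bdd_belowI[where m = 0], auto intro!: sum_nonneg)

lemma sum_nonzero_fibres:
  fixes h F :: "_ \<Rightarrow> real"
  assumes S: "finite S"
  shows "(\<Sum>y\<in>{y. (\<Sum>q\<in>{q\<in>S. G q = y}. h q) \<noteq> 0}. F y * (\<Sum>q\<in>{q\<in>S. G q = y}. h q))
    = (\<Sum>q\<in>S. F (G q) * h q)"
proof -
  have "(\<Sum>y\<in>{y. (\<Sum>q\<in>{q\<in>S. G q = y}. h q) \<noteq> 0}. F y * (\<Sum>q\<in>{q\<in>S. G q = y}. h q))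
      = (\<Sum>y\<in>G ` S. F y * (\<Sum>q\<in>{q\<in>S. G q = y}. h q))"
    using S by (intro sum.mono_neutral_left) (auto intro: sum.neutral)
  also have "\<dots> = (\<Sum>y\<in>G ` S. \<Sum>q\<in>{q\<in>S. G q = y}. F (G q) * h q)"
    by (simp add: sum_distrib_left)
  also have "\<dots> = (\<Sum>q\<in>S. F (G q) * h q)"
    using S by (intro sum.group) auto
  finally show ?thesis .
qed

lemma W1_le_coupling:
  fixes \<rho> :: "'a \<Rightarrow> 'b \<Rightarrow> real" and \<phi> :: "'a \<Rightarrow> real" and \<psi> :: "'b \<Rightarrow> real"
  assumes I: "finite I" and U: "finite U" and \<rho>: "\<And>i u. i \<in> I \<Longrightarrow> u \<in> U \<Longrightarrow> 0 \<le> \<rho> i u"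
    and \<mu>: "\<And>x. \<mu> x = (\<Sum>i\<in>{i\<in>I. \<phi> i = x}. \<Sum>u\<in>U. \<rho> i u)"
    and \<nu>: "\<And>y. \<nu> y = (\<Sum>u\<in>{u\<in>U. \<psi> u = y}. \<Sum>i\<in>I. \<rho> i u)"
  shows "W1 \<mu> \<nu> \<le> (\<Sum>i\<in>I. \<Sum>u\<in>U. \<bar>\<phi> i - \<psi> u\<bar> * \<rho> i u)"
proof -
  define K where "K q = (\<phi> (fst q), \<psi> (snd q))" for q
  define g where "g p = (\<Sum>q\<in>{q\<in>I \<times> U. K q = p}. case_prod \<rho> q)" for p
  have fin: "finite (I \<times> U)"
    using I U by simp
  have "{p. g p \<noteq> 0} \<subseteq> K ` (I \<times> U)"
    by (auto simp: g_def) (metis (mono_tags, lifting) empty_Collect_eq image_eqI sum.empty)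
  then have "finite {p. g p \<noteq> 0}"
    by (rule finite_subset) (simp add: fin)
  moreover have "0 \<le> g p" for p
    unfolding g_def using \<rho> by (intro sum_nonneg) auto
  moreover have "(\<Sum>y\<in>{y. g (x, y) \<noteq> 0}. g (x, y)) = \<mu> x" for x
  proof -
    have "g (x, y) = (\<Sum>q\<in>{q\<in>{i\<in>I. \<phi> i = x} \<times> U. \<psi> (snd q) = y}. case_prod \<rho> q)" for y
      unfolding g_def K_def by (intro sum.cong) auto
    then show ?thesis
      using sum_nonzero_fibres[where S = "{i\<in>I. \<phi> i = x} \<times> U" and G = "\<lambda>q. \<psi> (snd q)"
          and h = "case_prod \<rho>" and F = "\<lambda>_. 1"] I U
      by (simp add: \<mu> sum.cartesian_product)
  qed
  moreover have "(\<Sum>x\<in>{x. g (x, y) \<noteq> 0}. g (x, y)) = \<nu> y" for y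
  proof -
    have "g (x, y) = (\<Sum>q\<in>{q\<in>I \<times> {u\<in>U. \<psi> u = y}. \<phi> (fst q) = x}. case_prod \<rho> q)" for x
      unfolding g_def K_def by (intro sum.cong) auto
    moreover have "\<nu> y = (\<Sum>i\<in>I. \<Sum>u\<in>{u\<in>U. \<psi> u = y}. \<rho> i u)"
      unfolding \<nu> by (rule sum.swap)
    ultimately show ?thesis
      using sum_nonzero_fibres[where S = "I \<times> {u\<in>U. \<psi> u = y}" and G = "\<lambda>q. \<phi> (fst q)"
          and h = "case_prod \<rho>" and F = "\<lambda>_. 1"] I U
      by (simp add: sum.cartesian_product)
  qed
  ultimately have "W1 \<mu> \<nu> \<le> (\<Sum>p\<in>{p. g p \<noteq> 0}. \<bar>fst p - snd p\<bar> * g p)"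
    by (rule W1_le_cost)
  also have "\<dots> = (\<Sum>i\<in>I. \<Sum>u\<in>U. \<bar>\<phi> i - \<psi> u\<bar> * \<rho> i u)"
    using sum_nonzero_fibres[OF fin, where G = K and h = "case_prod \<rho>" and F = "\<lambda>p. \<bar>fst p - snd p\<bar>"]
    by (simp add: g_def K_def sum.cartesian_product split_def)
  finally show ?thesis .
qed

lemma sum_over_clusters:
  fixes w :: "'u \<Rightarrow> real" and k :: "'u \<Rightarrow> 'j"
  assumes U: "finite U" and J: "finite J" and k: "k ` U \<subseteq> J"
    and f: "\<And>j. j \<in> J \<Longrightarrow> (\<Sum>v\<in>{v\<in>U. k v = j}. w v) = 0 \<Longrightarrow> f j = 0"
  shows "(\<Sum>u\<in>U. f (k u) * (w u / (\<Sum>v\<in>{v\<in>U. k v = k u}. w v))) = (\<Sum>j\<in>J. f j)"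
proof -
  have "(\<Sum>u\<in>U. f (k u) * (w u / (\<Sum>v\<in>{v\<in>U. k v = k u}. w v)))
      = (\<Sum>j\<in>J. f j / (\<Sum>v\<in>{v\<in>U. k v = j}. w v) * (\<Sum>u\<in>{u\<in>U. k u = j}. w u))"
    by (subst sum.group[OF U J k, symmetric]) (auto simp: sum_distrib_left intro!: sum.cong)
  also have "\<dots> = (\<Sum>j\<in>J. f j)"
    using f by (intro sum.cong) auto
  finally show ?thesis .
qed

(* The coupling pi of indices is refined by splitting its column j over the cluster
   {u. k u = j} in proportion to the weights w u. *)
lemma W1_le_refined_coupling:
  fixes lam \<psi> w :: "_ \<Rightarrow> real" and k :: "_ \<Rightarrow> nat"
  assumes U: "finite U" and w: "\<And>u. 0 \<le> w u"
    and k: "\<And>u. u \<in> U \<Longrightarrow> k u \<in> {1..m}" and close: "\<And>u. u \<in> U \<Longrightarrow> \<bar>\<psi> u - lam (k u)\<bar> \<le> \<epsilon>"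
    and \<pi>: "\<And>i j. 0 \<le> \<pi> i j"
    and row: "\<And>i. i \<in> {1..m} \<Longrightarrow> (\<Sum>j\<in>{1..m}. \<pi> i j) = a i"
    and column: "\<And>j. j \<in> {1..m} \<Longrightarrow> (\<Sum>i\<in>{1..m}. \<pi> i j) = (\<Sum>u\<in>{u\<in>U. k u = j}. w u)"
    and \<mu>: "\<And>x. \<mu> x = (\<Sum>i\<in>{i\<in>{1..m}. lam i = x}. a i)"
    and \<nu>: "\<And>y. \<nu> y = (\<Sum>u\<in>{u\<in>U. \<psi> u = y}. w u)"
  shows "W1 \<mu> \<nu> \<le> (\<Sum>i\<in>{1..m}. \<Sum>j\<in>{1..m}. (\<bar>lam i - lam j\<bar> + \<epsilon>) * \<pi> i j)"
proof -
  define c where "c j = (\<Sum>u\<in>{u\<in>U. k u = j}. w u)" for j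
  define \<rho> where "\<rho> i u = \<pi> i (k u) * (w u / c (k u))" for i u
  have c: "0 \<le> c j" for j
    unfolding c_def using w by (intro sum_nonneg) auto
  have kU: "k ` U \<subseteq> {1..m}"
    using k by auto
  have \<pi>_zero: "\<pi> i j = 0" if "i \<in> {1..m}" "j \<in> {1..m}" "c j = 0" for i j
    using column[OF that(2)] that \<pi> by (simp add: c_def sum_nonneg_eq_0_iff)
  have "(\<Sum>u\<in>U. \<rho> i u) = a i" if i: "i \<in> {1..m}" for i
    using sum_over_clusters[OF U _ kU, where f = "\<pi> i"] \<pi>_zero[OF i] row[OF i]
    by (simp add: \<rho>_def c_def)
  moreover have "(\<Sum>i\<in>{1..m}. \<rho> i u) = w u" if u: "u \<in> U" for u
  proof -
    have "w u \<le> c (k u)"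
      unfolding c_def using U w u by (intro member_le_sum) auto
    moreover have "(\<Sum>i\<in>{1..m}. \<rho> i u) = c (k u) * (w u / c (k u))"
      unfolding \<rho>_def sum_distrib_right[symmetric] using column[OF k[OF u]] by (simp add: c_def)
    ultimately show ?thesis
      using w[of u] by (cases "c (k u) = 0") auto
  qed
  ultimately have "W1 \<mu> \<nu> \<le> (\<Sum>i\<in>{1..m}. \<Sum>u\<in>U. \<bar>lam i - \<psi> u\<bar> * \<rho> i u)"
    by (intro W1_le_coupling) (use U \<mu> \<nu> in \<open>auto simp: \<rho>_def \<pi> w c\<close>)
  also have "\<dots> \<le> (\<Sum>i\<in>{1..m}. \<Sum>u\<in>U. (\<bar>lam i - lam (k u)\<bar> + \<epsilon>) * \<rho> i u)"
    using close by (intro sum_mono mult_right_mono) (force simp: \<rho>_def \<pi> w c)+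
  also have "\<dots> = (\<Sum>i\<in>{1..m}. \<Sum>j\<in>{1..m}. (\<bar>lam i - lam j\<bar> + \<epsilon>) * \<pi> i j)"
  proof (intro sum.cong refl)
    fix i assume i: "i \<in> {1..m}"
    show "(\<Sum>u\<in>U. (\<bar>lam i - lam (k u)\<bar> + \<epsilon>) * \<rho> i u) = (\<Sum>j\<in>{1..m}. (\<bar>lam i - lam j\<bar> + \<epsilon>) * \<pi> i j)"
      using sum_over_clusters[OF U _ kU, where f = "\<lambda>j. (\<bar>lam i - lam j\<bar> + \<epsilon>) * \<pi> i j"] \<pi>_zero[OF i]
      by (simp add: \<rho>_def c_def mult.assoc)
  qed
  finally show ?thesis .
qed

lemma W1_le_clustered:
  fixes lam \<psi> w :: "_ \<Rightarrow> real" and k :: "_ \<Rightarrow> nat"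
  assumes U: "finite U" and w: "\<And>u. 0 \<le> w u" and a: "\<And>i. 0 \<le> a i"
    and lam: "mono_on {1..m} lam"
    and k: "\<And>u. u \<in> U \<Longrightarrow> k u \<in> {1..m}" and close: "\<And>u. u \<in> U \<Longrightarrow> \<bar>\<psi> u - lam (k u)\<bar> \<le> \<epsilon>"
    and total: "cumsum a m = (\<Sum>u\<in>U. w u)"
    and \<mu>: "\<And>x. \<mu> x = (\<Sum>i\<in>{i\<in>{1..m}. lam i = x}. a i)"
    and \<nu>: "\<And>y. \<nu> y = (\<Sum>u\<in>{u\<in>U. \<psi> u = y}. w u)"
  shows "W1 \<mu> \<nu> \<le> (\<Sum>h\<in>{1..m-1}. (lam (Suc h) - lam h) *
      \<bar>cumsum a h - cumsum (\<lambda>j. \<Sum>u\<in>{u\<in>U. k u = j}. w u) h\<bar>) + \<epsilon> * (\<Sum>u\<in>U. w u)"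
proof -
  define c where "c j = (\<Sum>u\<in>{u\<in>U. k u = j}. w u)" for j
  define \<pi> where "\<pi> = quantile_coupling a c"
  have c: "0 \<le> c j" for j
    unfolding c_def using w by (intro sum_nonneg) auto
  have "cumsum c m = (\<Sum>u\<in>U. w u)"
    unfolding cumsum_def c_def using k by (intro sum.group[OF U]) auto
  then have equal_mass: "cumsum a m = cumsum c m"
    using total by simp
  have "W1 \<mu> \<nu> \<le> (\<Sum>i\<in>{1..m}. \<Sum>j\<in>{1..m}. (\<bar>lam i - lam j\<bar> + \<epsilon>) * \<pi> i j)"
    using quantile_coupling_row_sum[OF a c equal_mass] quantile_coupling_column_sum[OF a c equal_mass]
    by (intro W1_le_refined_coupling[OF U w k close _ _ _ \<mu> \<nu>]) (auto simp: \<pi>_def c_def quantile_coupling_nonneg)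
  also have "\<dots> = (\<Sum>i\<in>{1..m}. \<Sum>j\<in>{1..m}. \<pi> i j * \<bar>lam i - lam j\<bar>)
      + \<epsilon> * (\<Sum>i\<in>{1..m}. \<Sum>j\<in>{1..m}. \<pi> i j)"
    by (simp add: algebra_simps sum.distrib sum_distrib_left)
  also have "(\<Sum>i\<in>{1..m}. \<Sum>j\<in>{1..m}. \<pi> i j) = cumsum a m"
    unfolding cumsum_def \<pi>_def using quantile_coupling_row_sum[OF a c equal_mass]
    by (intro sum.cong) auto
  finally show ?thesis
    unfolding \<pi>_def quantile_coupling_cost[OF a c equal_mass lam] total c_def .
qed

lemma power_spectrum_nonneg:
  assumes "hermitian M"
  shows "0 \<le> power_spectrum M f l"
proof -
  obtain B ev where "eigenbasis M B ev"
    using eigenbasis_exists[OF assms] by blast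
  then show ?thesis
    by (simp add: eigenbasis.power_spectrum_eq sum_nonneg)
qed

lemma cumsum_power_spectrum:
  assumes H: "hermitian H" and inj: "inj_on lam {1..m}" and lam: "lam ` {1..m} = spec H"
  shows "cumsum (\<lambda>j. power_spectrum H f (lam j)) m = norm f ^ 2"
proof -
  obtain B ev where eb: "eigenbasis H B ev"
    using eigenbasis_exists[OF H] by blast
  interpret eigenbasis H B ev by (fact eb)
  have "cumsum (\<lambda>j. power_spectrum H f (lam j)) m = (\<Sum>l\<in>ev ` B. power_spectrum H f l)"
    using sum.reindex[OF inj, of "power_spectrum H f"] lam by (simp add: cumsum_def spec_eq)
  also have "\<dots> = norm f ^ 2"
    using finite_basis by (simp add: power_spectrum_eq parseval sum.group)
  finally show ?thesis .
qed

lemma power_spectrum_reindex: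
  assumes "inj_on lam I" and "lam ` I = spec M"
  shows "power_spectrum M f x = (\<Sum>i\<in>{i\<in>I. lam i = x}. power_spectrum M f (lam i))"
proof (cases "x \<in> spec M")
  case True
  then obtain i where "i \<in> I" "x = lam i"
    using assms(2) by auto
  then have "{i\<in>I. lam i = x} = {i}"
    using assms(1) by (auto dest: inj_onD)
  then show ?thesis
    using \<open>x = lam i\<close> by simp
next
  case False
  then have "{i\<in>I. lam i = x} = {}"
    using assms(2) by auto
  then show ?thesis
    using False by (simp add: power_spectrum_def)
qed

lemma W1_power_spectrum_le:
  assumes H: "hermitian H" and eb: "eigenbasis K B ev"
    and lam: "strict_mono_on {1..m} lam" "lam ` {1..m} = spec H"
    and k: "\<And>u. u \<in> B \<Longrightarrow> k u \<in> {1..m} \<and> \<bar>ev u - lam (k u)\<bar> \<le> \<epsilon>"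
  shows "W1 (power_spectrum H f) (power_spectrum K f)
    \<le> (\<Sum>h\<in>{1..m-1}. (lam (Suc h) - lam h) * \<bar>cumsum (\<lambda>j. power_spectrum H f (lam j)) h
        - cumsum (\<lambda>j. \<Sum>u\<in>{u\<in>B. k u = j}. cmod (cinner u f) ^ 2) h\<bar>) + \<epsilon> * norm f ^ 2"
proof -
  interpret eigenbasis K B ev by (fact eb)
  have inj: "inj_on lam {1..m}"
    using lam(1) by (rule strict_mono_on_imp_inj_on)
  have "W1 (power_spectrum H f) (power_spectrum K f)
    \<le> (\<Sum>h\<in>{1..m-1}. (lam (Suc h) - lam h) * \<bar>cumsum (\<lambda>j. power_spectrum H f (lam j)) h
        - cumsum (\<lambda>j. \<Sum>u\<in>{u\<in>B. k u = j}. cmod (cinner u f) ^ 2) h\<bar>)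
      + \<epsilon> * (\<Sum>u\<in>B. cmod (cinner u f) ^ 2)"
  proof (rule W1_le_clustered)
    show "0 \<le> power_spectrum H f (lam i)" for i
      by (rule power_spectrum_nonneg[OF H])
    show "mono_on {1..m} lam"
      by (rule strict_mono_on_imp_mono_on[OF lam(1)])
    show "cumsum (\<lambda>j. power_spectrum H f (lam j)) m = (\<Sum>u\<in>B. cmod (cinner u f) ^ 2)"
      using cumsum_power_spectrum[OF H inj lam(2)] parseval by simp
    show "power_spectrum H f x = (\<Sum>i\<in>{i\<in>{1..m}. lam i = x}. power_spectrum H f (lam i))" for x
      by (rule power_spectrum_reindex[OF inj lam(2)])
  qed (use finite_basis k power_spectrum_eq in auto)
  then show ?thesis
    by (simp add: parseval)
qed

lemma cinner_Pcum_unperturbed: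
  assumes "hermitian H"
  shows "cinner f (Pcum H \<Delta> lam 0 h *v f) = of_real (cumsum (\<lambda>j. power_spectrum H f (lam j)) h)"
proof -
  obtain B ev where eb: "eigenbasis H B ev"
    using eigenbasis_exists[OF assms] by blast
  then have "eigenbasis (H + 0 *\<^sub>R \<Delta>) B ev"
    by simp
  then show ?thesis
    by (simp add: cinner_Pcum eigenbasis.power_spectrum_eq[OF eb] cumsum_def)
qed

lemma perturbed_eigenvalue_clusters:
  assumes H: "hermitian H" and eb: "eigenbasis (H + t *\<^sub>R \<Delta>) B ev"
    and inj: "inj_on lam {1..m}" and lam: "lam ` {1..m} = spec H"
    and gap: "ereal (\<bar>t\<bar> * spec_norm \<Delta>) < gap H / 2"
  obtains k where "\<And>u. u \<in> B \<Longrightarrow> k u \<in> {1..m} \<and> \<bar>ev u - lam (k u)\<bar> \<le> \<bar>t\<bar> * spec_norm \<Delta>"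
    and "\<And>j. j \<in> {1..m} \<Longrightarrow> {u\<in>B. \<bar>ev u - lam j\<bar> \<le> \<bar>t\<bar> * spec_norm \<Delta>} = {u\<in>B. k u = j}"
proof -
  have "\<exists>j\<in>{1..m}. \<bar>ev u - lam j\<bar> \<le> \<bar>t\<bar> * spec_norm \<Delta>" if "u \<in> B" for u
  proof -
    have "ev u \<in> spec (H + t *\<^sub>R \<Delta>)"
      using eigenbasis.spec_eq[OF eb] that by simp
    from eigenvalue_perturbation[OF H this]
    obtain l where "l \<in> spec H" "\<bar>l - ev u\<bar> \<le> \<bar>t\<bar> * spec_norm \<Delta>"
      by (auto simp: spec_norm_scaleR)
    then show ?thesis
      using lam by (force simp: abs_minus_commute)
  qed
  then obtain k where k: "\<And>u. u \<in> B \<Longrightarrow> k u \<in> {1..m} \<and> \<bar>ev u - lam (k u)\<bar> \<le> \<bar>t\<bar> * spec_norm \<Delta>"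
    by metis
  moreover have "{u\<in>B. \<bar>ev u - lam j\<bar> \<le> \<bar>t\<bar> * spec_norm \<Delta>} = {u\<in>B. k u = j}" if j: "j \<in> {1..m}" for j
  proof -
    have "k u = j" if u: "u \<in> B" "\<bar>ev u - lam j\<bar> \<le> \<bar>t\<bar> * spec_norm \<Delta>" for u
    proof -
      have "lam (k u) = lam j"
        using spec_eq_if_within_half_gap[OF _ _ k[OF u(1), THEN conjunct2] u(2) gap] k[OF u(1)] j lam by blast
      then show ?thesis
        using inj_onD[OF inj] k[OF u(1)] j by blast
    qed
    then show ?thesis
      using k j by auto
  qed
  ultimately show ?thesis
    using that by blast
qed

lemma cinner_Pcum_clustered:
  assumes eb: "eigenbasis (H + t *\<^sub>R \<Delta>) B ev" and h: "h \<le> m"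
    and cluster: "\<And>j. j \<in> {1..m} \<Longrightarrow> {u\<in>B. \<bar>ev u - lam j\<bar> \<le> \<bar>t\<bar> * spec_norm \<Delta>} = {u\<in>B. k u = j}"
  shows "cinner f (Pcum H \<Delta> lam t h *v f) = of_real (cumsum (\<lambda>j. \<Sum>u\<in>{u\<in>B. k u = j}. cmod (cinner u f) ^ 2) h)"
  unfolding cinner_Pcum[OF eb] cumsum_def using h cluster
  by (intro arg_cong[where f = of_real] sum.cong) auto

theorem lemma3p9:
  fixes H \<Delta> :: "complex^'n^'n" and f :: "complex^'n" and t :: real
    and lam :: "nat \<Rightarrow> real" and m :: nat
  assumes "hermitian H" and "hermitian \<Delta>" and "norm f = 1"
    and "m = card (spec H)"
    and "strict_mono_on {1..m} lam" and "lam ` {1..m} = spec H"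
    and "ereal (\<bar>t\<bar> * spec_norm \<Delta>) < gap H / 2"
  shows "W1 (power_spectrum H f) (power_spectrum (H + t *\<^sub>R \<Delta>) f)
    \<le> (\<Sum>h\<in>{1..m-1}. (lam (h+1) - lam h) *
          cmod (cinner f ((Pcum H \<Delta> lam 0 h - Pcum H \<Delta> lam t h) *v f)))
      + \<bar>t\<bar> * spec_norm \<Delta>"
proof -
  let ?\<epsilon> = "\<bar>t\<bar> * spec_norm \<Delta>"
  have inj: "inj_on lam {1..m}"
    using assms(5) by (rule strict_mono_on_imp_inj_on)
  obtain B ev where eb: "eigenbasis (H + t *\<^sub>R \<Delta>) B ev"
    using eigenbasis_exists hermitian_add hermitian_scaleR assms(1,2) by blast
  obtain k where k: "\<And>u. u \<in> B \<Longrightarrow> k u \<in> {1..m} \<and> \<bar>ev u - lam (k u)\<bar> \<le> ?\<epsilon>"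
    and cluster: "\<And>j. j \<in> {1..m} \<Longrightarrow> {u\<in>B. \<bar>ev u - lam j\<bar> \<le> ?\<epsilon>} = {u\<in>B. k u = j}"
    using perturbed_eigenvalue_clusters[OF assms(1) eb inj assms(6,7)] by blast
  let ?c = "\<lambda>j. \<Sum>u\<in>{u\<in>B. k u = j}. cmod (cinner u f) ^ 2"
  have "W1 (power_spectrum H f) (power_spectrum (H + t *\<^sub>R \<Delta>) f)
      \<le> (\<Sum>h\<in>{1..m-1}. (lam (Suc h) - lam h) *
          \<bar>cumsum (\<lambda>j. power_spectrum H f (lam j)) h - cumsum ?c h\<bar>) + ?\<epsilon> * norm f ^ 2"
    using W1_power_spectrum_le[OF assms(1) eb assms(5,6) k] .
  moreover have "cmod (cinner f ((Pcum H \<Delta> lam 0 h - Pcum H \<Delta> lam t h) *v f))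
      = \<bar>cumsum (\<lambda>j. power_spectrum H f (lam j)) h - cumsum ?c h\<bar>" if "h \<in> {1..m-1}" for h
  proof -
    have "h \<le> m"
      using that by auto
    from cinner_Pcum_clustered[OF eb this cluster] show ?thesis
      unfolding matrix_vector_mult_diff_rdistrib cinner_diff_right cinner_Pcum_unperturbed[OF assms(1)]
      by (simp flip: of_real_diff)
  qed
  ultimately show ?thesis
    using assms(3) by simp
qed

end
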